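(* Let $(\phi,V),(\phi',V')$ be finite-dimensional representations of $\mathfrak l_m$. On $\mathcal S(V,V')=\mathbb C[x,\xi]\otimes\mathrm{Hom}(V,V')$: (i) $\mathrm{Lie}^{\mathcal S}(\Omega_{\mathfrak a_m})=\hom(\Omega_{\mathfrak l_m})-2\sum_{i,j}\hom(x_i\partial_{x_j})\,\xi_i\partial_{\xi_j}+\hom(E_x)\bigl(\hom(E_x)-2E_\xi-m-1\bigr)+2E_\xi(E_\xi+m)$; (ii) $\mathrm{Lie}^{\mathrm{NS}}(\Omega_{\mathfrak a_m})=\mathrm{Lie}^{\mathcal S}(\Omega_{\mathfrak a_m})-2\sum_{i,j}\rho_\phi(x_i\partial_{x_j})\,\partial_{\xi_j}\partial_{x_i}-2\bigl(\rho_\phi(E_x)-E_\xi\bigr)\mathrm{Div}$; (iii) if $V=\mathbb C_\gamma$, then $\mathrm{Lie}^{\mathrm{NS}}(\Omega_{\mathfrak a_m})=\mathrm{Lie}^{\mathcal S}(\Omega_{\mathfrak a_m})+2\bigl(E_\xi+(m+1)\gamma\bigr)\mathrm{Div}$.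
   Context: $\mathrm{Vec}\,\mathbb R^m$ is the Lie algebra of complex polynomial vector fields on $\mathbb R^m$; $E_x=\sum_r x_r\partial_{x_r}$; $\mathfrak a_m=\mathrm{Span}\{\partial_{x_i},x_j\partial_{x_i},x_jE_x\}$, $\mathfrak l_m=\mathrm{Span}\{x_j\partial_{x_i}\}\cong\mathfrak{gl}_m$. $\Omega_{\mathfrak l_m}=\sum_{i,j}(x_i\partial_{x_j})(x_j\partial_{x_i})\in U(\mathfrak l_m)$, $\Omega_{\mathfrak a_m}=\Omega_{\mathfrak l_m}+E_x(E_x-m-1)-2\sum_i(x_iE_x)(\partial_{x_i})\in U(\mathfrak a_m)$. $\mathbb C_\gamma$ is the one-dimensional $\mathfrak l_m$-module with $x_i\partial_{x_j}\mapsto\gamma\delta_{ij}$. Tensor field action: $\mathrm{Lie}_\phi(X)h=\sum_jX_j\partial_{x_j}h+\sum_{i,j}(\partial_{x_i}X_j)\phi(x_i\partial_{x_j})h$ on $\mathcal F(V)=\mathbb C[x]\otimes V$. $\mathcal D(V,V')=\mathbb C[x,\partial_x]\otimes\mathrm{Hom}(V,V')$ with action $X\cdot T=\mathrm{Lie}_{\phi'}(X)\circ T-T\circ\mathrm{Lie}_\phi(X)$. Let $\mathcal S(V,V')=\mathbb C[x_1,\dots,x_m,\xi_1,\dots,\xi_m]\otimes\mathrm{Hom}(V,V')$ and let $\mathrm{NS}:\mathcal D(V,V')\to\mathcal S(V,V')$ be the linear bijection $x^I\partial_x^J\otimes\tau\mapsto x^I\xi^J\otimes\tau$ (normal order symbol).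 $\mathrm{Lie}^{\mathrm{NS}}(X)=\mathrm{NS}\circ(X\cdot)\circ\mathrm{NS}^{-1}$ is the transported action. Let $\hom$ denote the $\mathfrak l_m$-action $\hom(Y)\tau=\phi'(Y)\tau-\tau\phi(Y)$ on $\mathrm{Hom}(V,V')$ and $\rho_\phi(Y)\tau=-\tau\circ\phi(Y)$, both extended to $U(\mathfrak l_m)$ and acting on the $\mathrm{Hom}$ factor. The symbol action is $\mathrm{Lie}^{\mathcal S}(X)=\sum_jX_j\partial_{x_j}-\sum_{i,j}(\partial_{x_i}X_j)\xi_j\partial_{\xi_i}+\sum_{i,j}(\partial_{x_i}X_j)\hom(x_i\partial_{x_j})$ (the $\xi$-degree-preserving part of $\mathrm{Lie}^{\mathrm{NS}}(X)$), extended to $U(\mathfrak a_m)$. Finally $E_\xi=\sum_r\xi_r\partial_{\xi_r}$ and $\mathrm{Div}=\sum_i\partial_{\xi_i}\partial_{x_i}$. *)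

theory Defs
  imports "HOL-Analysis.Analysis" "HOL-Library.Function_Algebras"
begin

text \<open>The index set of coordinates x_1..x_m is a finite type 'm (m = CARD('m)).  V = complex^'n, V' = complex^'k, and
 Hom(V,V') = complex^'n^'k (matrices).  A representation phi of l_m = gl_m is given by its
 values phi i j = phi(x_i d_{x_j}).  Polynomials are coefficient functions on multi-indices
 (with finite support); a symbol s in S(V,V') is s I J = coefficient of x^I xi^J.\<close>

type_synonym 'm mi = "'m \<Rightarrow> nat"
type_synonym ('m,'n,'k) sym = "'m mi \<Rightarrow> 'm mi \<Rightarrow> complex^'n^'k"
type_synonym 'm vf = "'m \<Rightarrow> ('m mi \<Rightarrow> complex)"

definition is_glrep :: "('m \<Rightarrow> 'm \<Rightarrow> complex^'n::finite^'n) \<Rightarrow> bool" where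
  "is_glrep \<phi> \<longleftrightarrow> (\<forall>i j k l. \<phi> i j ** \<phi> k l - \<phi> k l ** \<phi> i j
      = (if j = k then \<phi> i l else 0) - (if l = i then \<phi> k j else 0))"

definition unitv :: "'m \<Rightarrow> 'm mi" where "unitv i = (\<lambda>j. if j = i then 1 else 0)"

definition mono :: "'m mi \<Rightarrow> ('m mi \<Rightarrow> complex)" where
  "mono A = (\<lambda>I. if I = A then 1 else 0)"

text \<open>polynomial vector fields X = sum_j X_j d_{x_j}, given by components X_j\<close>
definition vf_xd :: "'m \<Rightarrow> 'm \<Rightarrow> 'm vf" where
  "vf_xd i j = (\<lambda>k. if k = j then mono (unitv i) else (\<lambda>_. 0))"
definition vf_d :: "'m \<Rightarrow> 'm vf" where
  "vf_d i = (\<lambda>k. if k = i then mono (\<lambda>_. 0) else (\<lambda>_. 0))"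
definition vf_E :: "'m vf" where
  "vf_E = (\<lambda>k. mono (unitv k))"
definition vf_xE :: "'m \<Rightarrow> 'm vf" where
  "vf_xE i = (\<lambda>k. mono (\<lambda>r. unitv i r + unitv k r))"

definition pd :: "'m \<Rightarrow> ('m mi \<Rightarrow> complex) \<Rightarrow> ('m mi \<Rightarrow> complex)" where
  "pd i p = (\<lambda>I. of_nat (I i + 1) * p (I(i := I i + 1)))"

definition msc :: "complex \<Rightarrow> complex^'n::finite^'k::finite \<Rightarrow> complex^'n^'k" where
  "msc c A = (\<chi> a b. c * A $ a $ b)"

definition ssc :: "complex \<Rightarrow> ('m::finite,'n::finite,'k::finite) sym \<Rightarrow> ('m::finite,'n::finite,'k::finite) sym" where
  "ssc c s = (\<lambda>I J. msc c (s I J))"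

definition s_mx :: "'m \<Rightarrow> ('m::finite,'n::finite,'k::finite) sym \<Rightarrow> ('m::finite,'n::finite,'k::finite) sym" where
  "s_mx i s = (\<lambda>I J. if 0 < I i then s (I(i := I i - 1)) J else 0)"
definition s_dx :: "'m \<Rightarrow> ('m::finite,'n::finite,'k::finite) sym \<Rightarrow> ('m::finite,'n::finite,'k::finite) sym" where
  "s_dx i s = (\<lambda>I J. msc (of_nat (I i + 1)) (s (I(i := I i + 1)) J))"
definition s_mxi :: "'m \<Rightarrow> ('m::finite,'n::finite,'k::finite) sym \<Rightarrow> ('m::finite,'n::finite,'k::finite) sym" where
  "s_mxi i s = (\<lambda>I J. if 0 < J i then s I (J(i := J i - 1)) else 0)"
definition s_dxi :: "'m \<Rightarrow> ('m::finite,'n::finite,'k::finite) sym \<Rightarrow> ('m::finite,'n::finite,'k::finite) sym" where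
  "s_dxi i s = (\<lambda>I J. msc (of_nat (J i + 1)) (s I (J(i := J i + 1))))"
definition s_pmul :: "('m::finite mi \<Rightarrow> complex) \<Rightarrow> ('m::finite,'n::finite,'k::finite) sym \<Rightarrow> ('m::finite,'n::finite,'k::finite) sym" where
  "s_pmul p s = (\<lambda>I J. \<Sum>A\<in>{A. A \<le> I}. msc (p A) (s (\<lambda>r. I r - A r) J))"

definition s_hom :: "('m \<Rightarrow> 'm \<Rightarrow> complex^'n::finite^'n) \<Rightarrow> ('m \<Rightarrow> 'm \<Rightarrow> complex^'k::finite^'k)
    \<Rightarrow> 'm \<Rightarrow> 'm \<Rightarrow> ('m::finite,'n::finite,'k::finite) sym \<Rightarrow> ('m::finite,'n::finite,'k::finite) sym" where
  "s_hom \<phi> \<phi>' i j s = (\<lambda>I J. \<phi>' i j ** s I J - s I J ** \<phi> i j)"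
definition s_rho :: "('m \<Rightarrow> 'm \<Rightarrow> complex^'n::finite^'n) \<Rightarrow> 'm \<Rightarrow> 'm \<Rightarrow> ('m::finite,'n::finite,'k::finite) sym \<Rightarrow> ('m::finite,'n::finite,'k::finite) sym" where
  "s_rho \<phi> i j s = (\<lambda>I J. - (s I J ** \<phi> i j))"

definition homOmega where
  "homOmega \<phi> \<phi>' s = (\<Sum>i\<in>UNIV. \<Sum>j\<in>UNIV. s_hom \<phi> \<phi>' i j (s_hom \<phi> \<phi>' j i s))"
definition homE where
  "homE \<phi> \<phi>' s = (\<Sum>r\<in>UNIV. s_hom \<phi> \<phi>' r r s)"
definition rhoE where
  "rhoE \<phi> s = (\<Sum>r\<in>UNIV. s_rho \<phi> r r s)"
definition Exi :: "('m::finite,'n::finite,'k::finite) sym \<Rightarrow> ('m::finite,'n::finite,'k::finite) sym" where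
  "Exi s = (\<Sum>r\<in>UNIV. s_mxi r (s_dxi r s))"
definition Div :: "('m::finite,'n::finite,'k::finite) sym \<Rightarrow> ('m::finite,'n::finite,'k::finite) sym" where
  "Div s = (\<Sum>i\<in>UNIV. s_dxi i (s_dx i s))"

definition LieS :: "('m::finite \<Rightarrow> 'm \<Rightarrow> complex^'n::finite^'n) \<Rightarrow> ('m \<Rightarrow> 'm \<Rightarrow> complex^'k::finite^'k)
    \<Rightarrow> 'm vf \<Rightarrow> ('m::finite,'n::finite,'k::finite) sym \<Rightarrow> ('m::finite,'n::finite,'k::finite) sym" where
  "LieS \<phi> \<phi>' X s =
     (\<Sum>j\<in>UNIV. s_pmul (X j) (s_dx j s))
   - (\<Sum>i\<in>UNIV. \<Sum>j\<in>UNIV. s_pmul (pd i (X j)) (s_mxi j (s_dxi i s)))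
   + (\<Sum>i\<in>UNIV. \<Sum>j\<in>UNIV. s_pmul (pd i (X j)) (s_hom \<phi> \<phi>' i j s))"

definition Fpoly :: "('m::finite mi \<Rightarrow> complex^'n::finite) set" where
  "Fpoly = {f. finite {K. f K \<noteq> 0}}"
definition Ssym :: "('m::finite,'n::finite,'k::finite) sym set" where
  "Ssym = {s. finite {p. s (fst p) (snd p) \<noteq> 0}}"

definition f_dx :: "'m \<Rightarrow> ('m::finite mi \<Rightarrow> complex^'n::finite) \<Rightarrow> ('m::finite mi \<Rightarrow> complex^'n::finite)" where
  "f_dx j f = (\<lambda>K. of_nat (K j + 1) *s f (K(j := K j + 1)))"
definition f_pmul :: "('m::finite mi \<Rightarrow> complex) \<Rightarrow> ('m::finite mi \<Rightarrow> complex^'n::finite) \<Rightarrow> ('m::finite mi \<Rightarrow> complex^'n::finite)" where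
  "f_pmul p f = (\<lambda>K. \<Sum>A\<in>{A. A \<le> K}. p A *s f (\<lambda>r. K r - A r))"

definition LieF :: "('m::finite \<Rightarrow> 'm \<Rightarrow> complex^'n::finite^'n) \<Rightarrow> 'm vf
    \<Rightarrow> ('m::finite mi \<Rightarrow> complex^'n::finite) \<Rightarrow> ('m::finite mi \<Rightarrow> complex^'n::finite)" where
  "LieF \<phi> X f = (\<Sum>j\<in>UNIV. f_pmul (X j) (f_dx j f))
     + (\<Sum>i\<in>UNIV. \<Sum>j\<in>UNIV. f_pmul (pd i (X j)) (\<lambda>K. \<phi> i j *v f K))"

definition mpow :: "'m mi \<Rightarrow> ('m::finite mi \<Rightarrow> complex^'n::finite) \<Rightarrow> ('m::finite mi \<Rightarrow> complex^'n::finite)" where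
  "mpow I f = (\<lambda>K. if I \<le> K then f (\<lambda>r. K r - I r) else 0)"
definition dpow :: "'m::finite mi \<Rightarrow> ('m::finite mi \<Rightarrow> complex^'n::finite) \<Rightarrow> ('m::finite mi \<Rightarrow> complex^'n::finite)" where
  "dpow J f = (\<lambda>L. of_nat (\<Prod>r\<in>UNIV. fact (L r + J r) div fact (L r)) *s f (\<lambda>r. L r + J r))"

text \<open>NS^{-1}: the differential operator with normal-order symbol s, acting on F(V)\<close>
definition opS :: "('m::finite,'n::finite,'k::finite) sym \<Rightarrow> ('m::finite mi \<Rightarrow> complex^'n::finite) \<Rightarrow> ('m mi \<Rightarrow> complex^'k)" where
  "opS s f = (\<Sum>p\<in>{p. s (fst p) (snd p) \<noteq> 0}.
       mpow (fst p) (dpow (snd p) (\<lambda>L. s (fst p) (snd p) *v f L)))"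

text \<open>Transported action Lie^NS(X) = NS o (X .) o NS^{-1}\<close>
definition LieNS :: "('m::finite \<Rightarrow> 'm \<Rightarrow> complex^'n::finite^'n) \<Rightarrow> ('m \<Rightarrow> 'm \<Rightarrow> complex^'k::finite^'k)
    \<Rightarrow> 'm vf \<Rightarrow> ('m::finite,'n::finite,'k::finite) sym \<Rightarrow> ('m::finite,'n::finite,'k::finite) sym" where
  "LieNS \<phi> \<phi>' X s = (THE t. t \<in> Ssym \<and>
     (\<forall>f\<in>Fpoly. opS t f = LieF \<phi>' X (opS s f) - opS s (LieF \<phi> X f)))"

text \<open>Image of the Casimir Omega_{a_m} under the extension of an action L to U(a_m)\<close>
definition OmegaA :: "('m::finite vf \<Rightarrow> ('m::finite,'n::finite,'k::finite) sym \<Rightarrow> ('m::finite,'n::finite,'k::finite) sym)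
    \<Rightarrow> ('m::finite,'n::finite,'k::finite) sym \<Rightarrow> ('m::finite,'n::finite,'k::finite) sym" where
  "OmegaA L s =
     (\<Sum>i\<in>UNIV. \<Sum>j\<in>UNIV. L (vf_xd i j) (L (vf_xd j i) s))
   + L vf_E (L vf_E s - ssc (of_nat (CARD('m) + 1)) s)
   - ssc 2 (\<Sum>i\<in>UNIV. L (vf_xE i) (L (vf_d i) s))"

end

theory Submission
  imports Defs
begin

text \<open>
  Every operator in the statement is a polynomial in a few elementary operators on symbols:
  multiplication by \<open>x\<^sub>i\<close> and \<open>\<xi>\<^sub>i\<close>, the derivations \<open>\<partial>\<^sub>x\<^sub>i\<close> and \<open>\<partial>\<^sub>\<xi>\<^sub>i\<close>, and the matrix actions
  \<open>hom\<close> and \<open>\<rho>\<^sub>\<phi>\<close>.  They satisfy the Weyl algebra relations and the matrix actions commute with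
  the others, so part (i) is a normal-ordering computation.

  For part (ii), the differential operator \<open>NS\<^sup>-\<^sup>1(s)\<close> turns \<open>x\<^sub>i\<close> and \<open>\<xi>\<^sub>i\<close> into left multiplication
  by \<open>x\<^sub>i\<close> and right composition with \<open>\<partial>\<^sub>x\<^sub>i\<close>, and \<open>\<partial>\<^sub>x\<^sub>i\<close>, \<open>\<partial>\<^sub>\<xi>\<^sub>i\<close> into the commutators with \<open>\<partial>\<^sub>x\<^sub>i\<close>
  and \<open>x\<^sub>i\<close>.  As \<open>NS\<^sup>-\<^sup>1\<close> is injective, this determines \<open>Lie\<^sup>N\<^sup>S(X)\<close>: it agrees with \<open>Lie\<^sup>S(X)\<close> for the
  affine fields \<open>\<partial>\<^sub>x\<^sub>i\<close>, \<open>x\<^sub>j\<partial>\<^sub>x\<^sub>i\<close>, \<open>E\<^sub>x\<close>, and only the second order part of \<open>x\<^sub>i E\<^sub>x\<close> produces a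
  correction, whose contraction with \<open>\<partial>\<^sub>x\<^sub>i\<close> gives the extra terms.  Part (iii) is (ii) with
  \<open>\<rho>\<^sub>\<phi>(x\<^sub>i\<partial>\<^sub>x\<^sub>j) = -\<gamma>\<delta>\<^sub>i\<^sub>j\<close>.
\<close>

section \<open>Matrix algebra\<close>

lemma sum_apply: "(sum F A) x = (\<Sum>a\<in>A. F a x)"
  by (induction A rule: infinite_finite_induct) auto

lemma msc_component [simp]: "msc c A $ a $ b = c * A $ a $ b"
  by (simp add: msc_def)

lemma msc_zero_left [simp]: "msc 0 A = 0"
  and msc_one [simp]: "msc 1 A = A"
  and msc_zero_right [simp]: "msc c 0 = 0"
  by (simp_all add: vec_eq_iff)

lemma msc_nonzero: "msc c A \<noteq> 0 \<Longrightarrow> A \<noteq> 0"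
  by auto

lemma msc_add: "msc c (A + B) = msc c A + msc c B"
  and msc_diff: "msc c (A - B) = msc c A - msc c B"
  and msc_minus: "msc c (- A) = - msc c A"
  and msc_msc: "msc c (msc d A) = msc (c * d) A"
  and msc_add_left: "msc (c + d) A = msc c A + msc d A"
  by (simp_all add: vec_eq_iff algebra_simps)

lemma msc_sum: "msc c (sum F S) = (\<Sum>x\<in>S. msc c (F x))"
  by (simp add: vec_eq_iff sum_component sum_distrib_left)

lemma matrix_mult_msc_left: "msc c A ** B = msc c (A ** B)"
  and matrix_mult_msc_right: "A ** msc c B = msc c (A ** B)"
  by (simp_all add: vec_eq_iff matrix_matrix_mult_def sum_distrib_left algebra_simps)

lemma matrix_mult_mat_right: "A ** mat c = msc c A"
  by (simp add: vec_eq_iff matrix_matrix_mult_def mat_def if_distrib[of "\<lambda>x. _ * x"] sum.delta'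
      cong: if_cong)

lemma matrix_mult_add_left: "(A + B) ** C = A ** C + B ** C"
  by (simp add: vec_eq_iff matrix_matrix_mult_def sum.distrib algebra_simps)

lemma matrix_mult_diff_left: "(A - B :: 'a::ring_1^'n^'m) ** C = A ** C - B ** C"
  by (simp add: vec_eq_iff matrix_matrix_mult_def sum_subtractf algebra_simps)

lemma matrix_mult_diff_right: "C ** (A - B :: 'a::ring_1^'n^'m) = C ** A - C ** B"
  by (simp add: vec_eq_iff matrix_matrix_mult_def sum_subtractf algebra_simps)

lemma matrix_mult_minus_left: "(- A :: 'a::ring_1^'n^'m) ** C = - (A ** C)"
  by (simp add: vec_eq_iff matrix_matrix_mult_def sum_negf[symmetric])

lemma matrix_mult_minus_right: "C ** (- A :: 'a::ring_1^'n^'m) = - (C ** A)"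
  by (simp add: vec_eq_iff matrix_matrix_mult_def sum_negf[symmetric])

lemma matrix_mult_sum_left: "sum F S ** C = (\<Sum>x\<in>S. F x ** C)"
  by (induction S rule: infinite_finite_induct) (auto simp: matrix_mult_add_left)

lemma matrix_mult_sum_right: "C ** sum F S = (\<Sum>x\<in>S. C ** F x)"
  by (induction S rule: infinite_finite_induct) (auto simp: matrix_add_ldistrib)

lemmas matrix_mult_linear = matrix_mult_add_left matrix_add_ldistrib matrix_mult_diff_left
  matrix_mult_diff_right matrix_mult_minus_left matrix_mult_minus_right matrix_mult_sum_left
  matrix_mult_sum_right matrix_mult_msc_left matrix_mult_msc_right

section \<open>Elementary operators on symbols\<close>

type_synonym ('m, 'n) mat_family = "'m \<Rightarrow> 'm \<Rightarrow> complex^'n^'n"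

lemma ssc_apply [simp]: "ssc c s I J = msc c (s I J)"
  by (simp add: ssc_def)

lemma ssc_add [simp]: "ssc c (a + b) = ssc c a + ssc c b"
  and ssc_diff [simp]: "ssc c (a - b) = ssc c a - ssc c b"
  and ssc_sum [simp]: "ssc c (sum F S) = (\<Sum>x\<in>S. ssc c (F x))"
  and ssc_zero [simp]: "ssc c 0 = 0"
  and ssc_minus [simp]: "ssc c (- a) = - ssc c a"
  and ssc_ssc [simp]: "ssc c (ssc d a) = ssc (c * d) a"
  by (auto simp: fun_eq_iff sum_apply ssc_def msc_add msc_diff msc_sum msc_minus msc_msc)

lemma s_mx_add [simp]: "s_mx i (a + b) = s_mx i a + s_mx i b"
  and s_mx_diff [simp]: "s_mx i (a - b) = s_mx i a - s_mx i b"
  and s_mx_sum [simp]: "s_mx i (sum F S) = (\<Sum>x\<in>S. s_mx i (F x))"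
  and s_mx_ssc [simp]: "s_mx i (ssc c a) = ssc c (s_mx i a)"
  and s_mx_zero [simp]: "s_mx i 0 = 0"
  and s_mx_minus [simp]: "s_mx i (- a) = - s_mx i a"
  by (auto simp: s_mx_def fun_eq_iff sum_apply)

lemma s_mxi_add [simp]: "s_mxi i (a + b) = s_mxi i a + s_mxi i b"
  and s_mxi_diff [simp]: "s_mxi i (a - b) = s_mxi i a - s_mxi i b"
  and s_mxi_sum [simp]: "s_mxi i (sum F S) = (\<Sum>x\<in>S. s_mxi i (F x))"
  and s_mxi_ssc [simp]: "s_mxi i (ssc c a) = ssc c (s_mxi i a)"
  and s_mxi_zero [simp]: "s_mxi i 0 = 0"
  and s_mxi_minus [simp]: "s_mxi i (- a) = - s_mxi i a"
  by (auto simp: s_mxi_def fun_eq_iff sum_apply)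

lemma s_dx_add [simp]: "s_dx i (a + b) = s_dx i a + s_dx i b"
  and s_dx_diff [simp]: "s_dx i (a - b) = s_dx i a - s_dx i b"
  and s_dx_sum [simp]: "s_dx i (sum F S) = (\<Sum>x\<in>S. s_dx i (F x))"
  and s_dx_ssc [simp]: "s_dx i (ssc c a) = ssc c (s_dx i a)"
  and s_dx_zero [simp]: "s_dx i 0 = 0"
  and s_dx_minus [simp]: "s_dx i (- a) = - s_dx i a"
  by (auto simp: s_dx_def fun_eq_iff sum_apply msc_add msc_diff msc_sum msc_minus msc_msc
      mult.commute)

lemma s_dxi_add [simp]: "s_dxi i (a + b) = s_dxi i a + s_dxi i b"
  and s_dxi_diff [simp]: "s_dxi i (a - b) = s_dxi i a - s_dxi i b"
  and s_dxi_sum [simp]: "s_dxi i (sum F S) = (\<Sum>x\<in>S. s_dxi i (F x))"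
  and s_dxi_ssc [simp]: "s_dxi i (ssc c a) = ssc c (s_dxi i a)"
  and s_dxi_zero [simp]: "s_dxi i 0 = 0"
  and s_dxi_minus [simp]: "s_dxi i (- a) = - s_dxi i a"
  by (auto simp: s_dxi_def fun_eq_iff sum_apply msc_add msc_diff msc_sum msc_minus msc_msc
      mult.commute)

lemma s_hom_add [simp]: "s_hom p q i j (a + b) = s_hom p q i j a + s_hom p q i j b"
  and s_hom_diff [simp]: "s_hom p q i j (a - b) = s_hom p q i j a - s_hom p q i j b"
  and s_hom_sum [simp]: "s_hom p q i j (sum F S) = (\<Sum>x\<in>S. s_hom p q i j (F x))"
  and s_hom_ssc [simp]: "s_hom p q i j (ssc c a) = ssc c (s_hom p q i j a)"
  and s_hom_zero [simp]: "s_hom p q i j 0 = 0"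
  and s_hom_minus [simp]: "s_hom p q i j (- a) = - s_hom p q i j a"
  by (auto simp: s_hom_def fun_eq_iff sum_apply matrix_mult_linear sum_subtractf msc_diff)

lemma s_rho_add [simp]: "s_rho p i j (a + b) = s_rho p i j a + s_rho p i j b"
  and s_rho_diff [simp]: "s_rho p i j (a - b) = s_rho p i j a - s_rho p i j b"
  and s_rho_sum [simp]: "s_rho p i j (sum F S) = (\<Sum>x\<in>S. s_rho p i j (F x))"
  and s_rho_ssc [simp]: "s_rho p i j (ssc c a) = ssc c (s_rho p i j a)"
  and s_rho_zero [simp]: "s_rho p i j 0 = 0"
  and s_rho_minus [simp]: "s_rho p i j (- a) = - s_rho p i j a"
  by (auto simp: s_rho_def fun_eq_iff sum_apply matrix_mult_linear sum_negf msc_minus)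

lemma s_dx_s_mx: "s_dx i (s_mx j t) = s_mx j (s_dx i t) + (if i = j then t else 0)"
  by (auto simp: s_dx_def s_mx_def fun_eq_iff fun_upd_twist vec_eq_iff algebra_simps)

lemma s_dxi_s_mxi: "s_dxi i (s_mxi j t) = s_mxi j (s_dxi i t) + (if i = j then t else 0)"
  by (auto simp: s_dxi_def s_mxi_def fun_eq_iff fun_upd_twist vec_eq_iff algebra_simps)

lemma s_dx_s_mxi: "s_dx i (s_mxi j t) = s_mxi j (s_dx i t)"
  by (auto simp: s_dx_def s_mxi_def fun_eq_iff)

lemma s_dxi_s_mx: "s_dxi i (s_mx j t) = s_mx j (s_dxi i t)"
  by (auto simp: s_dxi_def s_mx_def fun_eq_iff)

lemma s_mxi_s_mx: "s_mxi i (s_mx j t) = s_mx j (s_mxi i t)"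
  by (auto simp: s_mxi_def s_mx_def fun_eq_iff)

lemma s_dxi_s_dx: "s_dxi i (s_dx j t) = s_dx j (s_dxi i t)"
  by (auto simp: s_dxi_def s_dx_def fun_eq_iff msc_msc mult.commute)

lemma s_dx_s_dx: "s_dx i (s_dx j t) = s_dx j (s_dx i t)"
  by (cases "i = j") (auto simp: s_dx_def fun_eq_iff msc_msc mult.commute fun_upd_twist)

lemma s_dxi_s_dxi: "s_dxi i (s_dxi j t) = s_dxi j (s_dxi i t)"
  by (cases "i = j") (auto simp: s_dxi_def fun_eq_iff msc_msc mult.commute fun_upd_twist)

lemma s_hom_s_mx: "s_hom p q a b (s_mx j t) = s_mx j (s_hom p q a b t)"
  and s_hom_s_mxi: "s_hom p q a b (s_mxi j t) = s_mxi j (s_hom p q a b t)"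
  and s_hom_s_dx: "s_hom p q a b (s_dx j t) = s_dx j (s_hom p q a b t)"
  and s_hom_s_dxi: "s_hom p q a b (s_dxi j t) = s_dxi j (s_hom p q a b t)"
  by (auto simp: s_hom_def s_mx_def s_mxi_def s_dx_def s_dxi_def fun_eq_iff
      matrix_mult_msc_left matrix_mult_msc_right msc_diff)

text \<open>Rewriting with these rules brings a composite operator into normal order: multiplications
  \<open>x\<^sub>i\<close>, \<open>\<xi>\<^sub>i\<close> to the left of derivations, and the matrix actions innermost.\<close>
lemmas s_normal_order = s_dx_s_mx s_dxi_s_mxi s_dx_s_mxi s_dxi_s_mx s_mxi_s_mx s_dxi_s_dx
  s_hom_s_mx s_hom_s_mxi s_hom_s_dx s_hom_s_dxi

section \<open>The symbol action on the generators of the affine algebra\<close>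

lemma finite_multiindices_le: "finite {A::'m::finite mi. A \<le> I}"
proof (rule finite_subset)
  show "{A::'m mi. A \<le> I} \<subseteq> PiE UNIV (\<lambda>r. {..I r})"
    by (auto simp: le_fun_def PiE_def Pi_def extensional_def)
qed (rule finite_PiE, auto)

lemma unitv_same [simp]: "unitv i i = 1"
  and unitv_other [simp]: "i \<noteq> j \<Longrightarrow> unitv i j = 0"
  by (simp_all add: unitv_def)

lemma unitv_le_iff: "unitv i \<le> I \<longleftrightarrow> 0 < I i"
  by (auto simp: le_fun_def unitv_def)

lemma minus_unitv: "(\<lambda>r. I r - unitv i r) = I(i := I i - 1)"
  by (auto simp: unitv_def fun_eq_iff)

lemma pd_mono: "pd a (mono A) = (\<lambda>I. if I = A(a := A a - 1) \<and> 0 < A a then of_nat (A a) else 0)"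
proof -
  have "\<And>I. (I(a := I a + 1) = A) = (I = A(a := A a - 1) \<and> 0 < A a)"
    by (auto simp: fun_eq_iff split: if_splits)
  then show ?thesis
    by (auto simp: pd_def mono_def fun_eq_iff)
qed

lemma pd_zero [simp]: "pd a (\<lambda>_. 0) = (\<lambda>_. 0)"
  by (simp add: pd_def)

lemma pd_mono_zero: "pd a (mono (\<lambda>_. 0)) = (\<lambda>_. 0)"
  by (simp add: pd_mono)

lemma pd_mono_unitv: "pd a (mono (unitv k)) = (if a = k then mono (\<lambda>_. 0) else (\<lambda>_. 0))"
proof -
  have "(unitv k)(k := 0) = (\<lambda>_. 0)"
    by (auto simp: unitv_def fun_eq_iff)
  then show ?thesis
    unfolding pd_mono by (cases "a = k") (simp_all add: mono_def cong: if_cong)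
qed

lemma pd_mono_unitv_add: "pd a (mono (\<lambda>r. unitv i r + unitv k r))
    = (\<lambda>I. (if a = i then mono (unitv k) I else 0) + (if a = k then mono (unitv i) I else 0))"
proof -
  let ?A = "\<lambda>r. unitv i r + unitv k r"
  have "?A(a := ?A a - 1) = (if a = i then unitv k else unitv i)" if "a = i \<or> a = k"
    using that by (auto simp: unitv_def fun_eq_iff)
  then show ?thesis
    unfolding pd_mono by (cases "a = i"; cases "a = k") (auto simp: mono_def fun_eq_iff)
qed

lemma pd_if: "pd a (if c then p1 else p2) = (if c then pd a p1 else pd a p2)"
  by simp

lemma sum_if_const: "(\<Sum>j\<in>S. if c then F j else 0) = (if c then (\<Sum>j\<in>S. F j) else 0)"
  by simp

definition s_shift :: "'m mi \<Rightarrow> ('m::finite,'n::finite,'k::finite) sym \<Rightarrow> ('m,'n,'k) sym" where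
  "s_shift A s = (\<lambda>I J. if A \<le> I then s (\<lambda>r. I r - A r) J else 0)"

lemma s_shift_zero: "s_shift (\<lambda>_. 0) s = s"
  by (simp add: s_shift_def fun_eq_iff le_fun_def)

lemma s_mx_eq_s_shift: "s_mx i s = s_shift (unitv i) s"
  unfolding s_mx_def s_shift_def unitv_le_iff minus_unitv ..

lemma le_iff_add_le: "(A \<le> I \<and> B \<le> (\<lambda>r. I r - A r)) \<longleftrightarrow> (\<lambda>r. A r + B r) \<le> (I :: 'a \<Rightarrow> nat)"
proof -
  have "\<forall>x. (A x \<le> I x \<and> B x \<le> I x - A x) = (A x + B x \<le> I x)"
    by auto
  then show ?thesis
    unfolding le_fun_def by blast
qed

lemma s_shift_s_shift: "s_shift A (s_shift B s) = s_shift (\<lambda>r. A r + B r) s"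
  unfolding s_shift_def fun_eq_iff using le_iff_add_le by (auto simp: diff_diff_add)

lemma s_pmul_single: "s_pmul (\<lambda>I. if I = B then c else 0) s = ssc c (s_shift B s)"
proof -
  have "\<And>I J. (\<Sum>A\<in>{A. A \<le> I}. msc (if A = B then c else 0) (s (\<lambda>r. I r - A r) J))
      = (if B \<le> I then msc c (s (\<lambda>r. I r - B r) J) else 0)"
    by (simp add: if_distrib[of "\<lambda>x. msc x _"] sum.delta[OF finite_multiindices_le]
        cong: if_cong)
  then show ?thesis
    by (simp add: s_pmul_def s_shift_def fun_eq_iff)
qed

lemma s_pmul_mono: "s_pmul (mono B) s = s_shift B s"
  using s_pmul_single[of B 1 s] by (simp add: mono_def ssc_def)

lemma s_pmul_zero [simp]: "s_pmul (\<lambda>_. 0) s = 0"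
  by (simp add: s_pmul_def fun_eq_iff)

lemma s_pmul_add_poly: "s_pmul (\<lambda>I. p I + q I) s = s_pmul p s + s_pmul q s"
  by (simp add: s_pmul_def fun_eq_iff msc_add_left sum.distrib)

lemma s_pmul_if_zero: "s_pmul (\<lambda>I. if c then p I else 0) s = (if c then s_pmul p s else 0)"
  by (cases c) simp_all

lemma s_pmul_if: "s_pmul (if c then p1 else p2) t = (if c then s_pmul p1 t else s_pmul p2 t)"
  by simp

lemma LieS_d: "LieS p q (vf_d i) t = s_dx i t"
  by (simp add: LieS_def vf_d_def s_pmul_if pd_if sum_if_const pd_mono_zero s_pmul_mono
      s_shift_zero cong: if_cong)

lemma LieS_xd:
  "LieS p q (vf_xd i j) t = s_mx i (s_dx j t) - s_mxi j (s_dxi i t) + s_hom p q i j t"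
  by (simp add: LieS_def vf_xd_def s_pmul_if pd_if sum_if_const pd_mono_unitv s_pmul_mono
      s_shift_zero s_mx_eq_s_shift cong: if_cong)

lemma LieS_E: "LieS p q vf_E t = (\<Sum>j\<in>UNIV. s_mx j (s_dx j t))
    - (\<Sum>a\<in>UNIV. s_mxi a (s_dxi a t)) + (\<Sum>a\<in>UNIV. s_hom p q a a t)"
  by (simp add: LieS_def vf_E_def s_pmul_if pd_if sum_if_const pd_mono_unitv s_pmul_mono
      s_shift_zero s_mx_eq_s_shift cong: if_cong)

lemma LieS_xE: "LieS p q (vf_xE i) t =
     (\<Sum>j\<in>UNIV. s_mx i (s_mx j (s_dx j t)))
   - ((\<Sum>j\<in>UNIV. s_mx j (s_mxi j (s_dxi i t))) + (\<Sum>a\<in>UNIV. s_mx i (s_mxi a (s_dxi a t))))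
   + ((\<Sum>j\<in>UNIV. s_mx j (s_hom p q i j t)) + (\<Sum>a\<in>UNIV. s_mx i (s_hom p q a a t)))"
  by (simp add: LieS_def vf_xE_def pd_mono_unitv_add s_pmul_add_poly s_pmul_if_zero s_pmul_mono
      s_mx_eq_s_shift s_shift_s_shift sum.distrib sum_if_const cong: if_cong)

section \<open>Part (i): normal ordering\<close>

text \<open>Normally ordered second order operators: together with \<open>Exi\<close>, \<open>homE\<close> and \<open>homOmega\<close>
  they span both sides of part (i) once these are brought into normal order.\<close>

definition E_x :: "('m::finite,'n::finite,'k::finite) sym \<Rightarrow> ('m,'n,'k) sym" where
  "E_x s = (\<Sum>i\<in>UNIV. s_mx i (s_dx i s))"

definition xx_dd :: "('m::finite,'n::finite,'k::finite) sym \<Rightarrow> ('m,'n,'k) sym" where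
  "xx_dd s = (\<Sum>i\<in>UNIV. \<Sum>j\<in>UNIV. s_mx i (s_mx j (s_dx j (s_dx i s))))"

definition x_xi_Div :: "('m::finite,'n::finite,'k::finite) sym \<Rightarrow> ('m,'n,'k) sym" where
  "x_xi_Div s = (\<Sum>i\<in>UNIV. \<Sum>j\<in>UNIV. s_mx i (s_mxi i (s_dx j (s_dxi j s))))"

definition x_xi_d_dxi :: "('m::finite,'n::finite,'k::finite) sym \<Rightarrow> ('m,'n,'k) sym" where
  "x_xi_d_dxi s = (\<Sum>i\<in>UNIV. \<Sum>j\<in>UNIV. s_mx i (s_mxi j (s_dx i (s_dxi j s))))"

definition xixi_dxidxi :: "('m::finite,'n::finite,'k::finite) sym \<Rightarrow> ('m,'n,'k) sym" where
  "xixi_dxidxi s = (\<Sum>i\<in>UNIV. \<Sum>j\<in>UNIV. s_mxi i (s_mxi j (s_dxi j (s_dxi i s))))"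

definition x_d_hom ::
    "('m::finite, 'n::finite) mat_family \<Rightarrow> ('m, 'k::finite) mat_family \<Rightarrow> ('m,'n,'k) sym \<Rightarrow> ('m,'n,'k) sym"
  where
  "x_d_hom p q s = (\<Sum>i\<in>UNIV. \<Sum>j\<in>UNIV. s_mx i (s_dx j (s_hom p q j i s)))"

definition xi_dxi_hom ::
    "('m::finite, 'n::finite) mat_family \<Rightarrow> ('m, 'k::finite) mat_family \<Rightarrow> ('m,'n,'k) sym \<Rightarrow> ('m,'n,'k) sym"
  where
  "xi_dxi_hom p q s = (\<Sum>i\<in>UNIV. \<Sum>j\<in>UNIV. s_mxi i (s_dxi j (s_hom p q i j s)))"

definition x_d_homE ::
    "('m::finite, 'n::finite) mat_family \<Rightarrow> ('m, 'k::finite) mat_family \<Rightarrow> ('m,'n,'k) sym \<Rightarrow> ('m,'n,'k) sym"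
  where
  "x_d_homE p q s = (\<Sum>k\<in>UNIV. \<Sum>a\<in>UNIV. s_mx k (s_dx k (s_hom p q a a s)))"

definition xi_dxi_homE ::
    "('m::finite, 'n::finite) mat_family \<Rightarrow> ('m, 'k::finite) mat_family \<Rightarrow> ('m,'n,'k) sym \<Rightarrow> ('m,'n,'k) sym"
  where
  "xi_dxi_homE p q s = (\<Sum>k\<in>UNIV. \<Sum>a\<in>UNIV. s_mxi k (s_dxi k (s_hom p q a a s)))"

lemma x_xi_Div_swap: "(\<Sum>i\<in>UNIV. \<Sum>j\<in>UNIV. s_mx j (s_mxi j (s_dx i (s_dxi i s)))) = x_xi_Div s"
  and x_xi_d_dxi_swap: "(\<Sum>i\<in>UNIV. \<Sum>j\<in>UNIV. s_mx j (s_mxi i (s_dx j (s_dxi i s)))) = x_xi_d_dxi s"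
  and xixi_dxidxi_swap: "(\<Sum>i\<in>UNIV. \<Sum>j\<in>UNIV. s_mxi j (s_mxi i (s_dxi i (s_dxi j s)))) = xixi_dxidxi s"
  and x_d_hom_swap: "(\<Sum>i\<in>UNIV. \<Sum>j\<in>UNIV. s_mx j (s_dx i (s_hom p q i j s))) = x_d_hom p q s"
  and xi_dxi_hom_swap: "(\<Sum>i\<in>UNIV. \<Sum>j\<in>UNIV. s_mxi j (s_dxi i (s_hom p q j i s))) = xi_dxi_hom p q s"
  and x_d_homE_swap: "(\<Sum>i\<in>UNIV. \<Sum>j\<in>UNIV. s_mx j (s_dx j (s_hom p q i i s))) = x_d_homE p q s"
  and xi_dxi_homE_swap: "(\<Sum>i\<in>UNIV. \<Sum>j\<in>UNIV. s_mxi j (s_dxi j (s_hom p q i i s))) = xi_dxi_homE p q s"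
  unfolding x_xi_Div_def x_xi_d_dxi_def xixi_dxidxi_def x_d_hom_def xi_dxi_hom_def x_d_homE_def
    xi_dxi_homE_def
  by (rule sum.swap)+

lemma homE_homE: "(\<Sum>a\<in>UNIV. \<Sum>b\<in>UNIV. s_hom p q a a (s_hom p q b b s)) = homE p q (homE p q s)"
  by (simp add: homE_def)

lemma xx_dd_commute: "(\<Sum>i\<in>UNIV. \<Sum>j\<in>UNIV. s_mx i (s_mx j (s_dx i (s_dx j s)))) = xx_dd s"
  unfolding xx_dd_def by (simp add: s_dx_s_dx[of i j for i j])

lemma xixi_dxidxi_commute:
  "(\<Sum>i\<in>UNIV. \<Sum>j\<in>UNIV. s_mxi i (s_mxi j (s_dxi i (s_dxi j s)))) = xixi_dxidxi s"
  unfolding xixi_dxidxi_def by (simp add: s_dxi_s_dxi[of i j for i j])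

lemmas fold_second_order = xx_dd_def[symmetric] x_xi_Div_def[symmetric] x_xi_d_dxi_def[symmetric]
  xixi_dxidxi_def[symmetric] x_d_hom_def[symmetric] xi_dxi_hom_def[symmetric]
  x_d_homE_def[symmetric] xi_dxi_homE_def[symmetric] homOmega_def[symmetric]
  x_xi_Div_swap x_xi_d_dxi_swap xixi_dxidxi_swap x_d_hom_swap xi_dxi_hom_swap x_d_homE_swap
  xi_dxi_homE_swap homE_homE xx_dd_commute xixi_dxidxi_commute sum_distrib_left[symmetric] ssc_sum[symmetric]

lemmas fold_first_order = E_x_def[symmetric] Exi_def[symmetric] homE_def[symmetric]

context
  fixes s :: "('m::finite,'n::finite,'k::finite) sym"
begin

lemma LieS_Omega_gl: "(\<Sum>i\<in>UNIV. \<Sum>j\<in>UNIV. LieS p q (vf_xd i j) (LieS p q (vf_xd j i) s)) =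
    xx_dd s + ssc (of_nat CARD('m)) (E_x s) - ssc 2 (x_xi_Div s) + ssc 2 (x_d_hom p q s)
    + xixi_dxidxi s + ssc (of_nat CARD('m)) (Exi s) - ssc 2 (xi_dxi_hom p q s) + homOmega p q s"
  by (simp add: LieS_xd s_normal_order sum.distrib sum_subtractf,
      simp only: fold_second_order, simp only: fold_first_order,
      simp add: fun_eq_iff vec_eq_iff algebra_simps of_nat_index)

lemma LieS_E_E: "LieS p q vf_E (LieS p q vf_E s - ssc (of_nat (CARD('m) + 1)) s) =
    xx_dd s + E_x s - x_xi_d_dxi s + x_d_homE p q s - ssc (1 + of_nat CARD('m)) (E_x s)
    - (x_xi_d_dxi s - (xixi_dxidxi s + Exi s) + xi_dxi_homE p q s
       - ssc (1 + of_nat CARD('m)) (Exi s))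
    + (x_d_homE p q s - xi_dxi_homE p q s + homE p q (homE p q s)
       - ssc (1 + of_nat CARD('m)) (homE p q s))"
  by (simp add: LieS_E s_normal_order sum.distrib sum_subtractf,
      simp only: fold_second_order, simp only: fold_first_order, simp add: algebra_simps)

lemma LieS_xE_d: "(\<Sum>i\<in>UNIV. LieS p q (vf_xE i) (LieS p q (vf_d i) s)) =
    xx_dd s - (x_xi_Div s + x_xi_d_dxi s) + (x_d_hom p q s + x_d_homE p q s)"
  by (simp add: LieS_xE LieS_d s_normal_order sum.distrib sum_subtractf)
    (simp only: fold_second_order)

lemma part_i_rhs_normal_order:
  "homOmega p q s
   - ssc 2 (\<Sum>i\<in>UNIV. \<Sum>j\<in>UNIV. s_hom p q i j (s_mxi i (s_dxi j s)))
   + homE p q (homE p q s - ssc 2 (Exi s) - ssc (of_nat (CARD('m) + 1)) s)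
   + ssc 2 (Exi (Exi s + ssc (of_nat CARD('m)) s)) =
   homOmega p q s - ssc 2 (xi_dxi_hom p q s)
   + (homE p q (homE p q s) - ssc 2 (xi_dxi_homE p q s)
      - ssc (1 + of_nat CARD('m)) (homE p q s))
   + (ssc 2 (xixi_dxidxi s) + ssc 2 (Exi s) + ssc (2 * of_nat CARD('m)) (Exi s))"
  by (simp add: homE_def Exi_def s_normal_order sum.distrib sum_subtractf)
    (simp only: fold_second_order)

lemma OmegaA_LieS:
  "OmegaA (LieS p q) s =
     homOmega p q s
     - ssc 2 (\<Sum>i\<in>UNIV. \<Sum>j\<in>UNIV. s_hom p q i j (s_mxi i (s_dxi j s)))
     + homE p q (homE p q s - ssc 2 (Exi s) - ssc (of_nat (CARD('m) + 1)) s)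
     + ssc 2 (Exi (Exi s + ssc (of_nat CARD('m)) s))"
  unfolding OmegaA_def LieS_Omega_gl LieS_E_E LieS_xE_d part_i_rhs_normal_order
  by (simp add: fun_eq_iff vec_eq_iff algebra_simps of_nat_index)

end

section \<open>Tensor fields\<close>

definition f_mat :: "complex^'n^'k \<Rightarrow> ('m mi \<Rightarrow> complex^'n) \<Rightarrow> ('m mi \<Rightarrow> complex^'k)" where
  "f_mat M f = (\<lambda>K. M *v f K)"

definition f_scale :: "complex \<Rightarrow> ('m mi \<Rightarrow> complex^'n) \<Rightarrow> ('m mi \<Rightarrow> complex^'n)" where
  "f_scale c f = (\<lambda>K. c *s f K)"

lemma f_scale_apply [simp]: "f_scale c f K = c *s f K"
  by (simp add: f_scale_def)

lemma f_mat_apply [simp]: "f_mat M f K = M *v f K"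
  by (simp add: f_mat_def)

lemma matrix_vector_mult_sum: "(M::'a::comm_semiring_1^'n^'k) *v sum F S = (\<Sum>x\<in>S. M *v F x)"
  by (induction S rule: infinite_finite_induct) (auto simp: matrix_vector_right_distrib)

lemma matrix_vector_mult_scale: "(M::'a::comm_semiring_1^'n^'k) *v (c *s v) = c *s (M *v v)"
  by (simp add: vec_eq_iff matrix_vector_mult_def sum_distrib_left algebra_simps)

lemma matrix_vector_mult_minus_left: "(- M::'a::comm_ring_1^'n^'k) *v v = - (M *v v)"
  by (simp add: vec_eq_iff matrix_vector_mult_def sum_negf[symmetric])

lemma vector_scale_sum: "(c::'a::comm_semiring_1) *s sum F S = (\<Sum>x\<in>S. c *s F x)"
  by (simp add: vec_eq_iff sum_component sum_distrib_left)

lemma msc_matrix_vector_mult: "msc c A *v v = c *s (A *v v)"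
  by (simp add: vec_eq_iff matrix_vector_mult_def sum_distrib_left algebra_simps)

lemma mpow_add [simp]: "mpow A (f + g) = mpow A f + mpow A g"
  and mpow_diff [simp]: "mpow A (f - g) = mpow A f - mpow A g"
  and mpow_sum [simp]: "mpow A (sum F S) = (\<Sum>x\<in>S. mpow A (F x))"
  and mpow_f_scale [simp]: "mpow A (f_scale c f) = f_scale c (mpow A f)"
  and mpow_zero [simp]: "mpow A 0 = 0"
  and mpow_minus [simp]: "mpow A (- f) = - mpow A f"
  and mpow_f_mat [simp]: "mpow A (f_mat M f) = f_mat M (mpow A f)"
  by (auto simp: mpow_def fun_eq_iff sum_apply)

lemma dpow_add [simp]: "dpow A (f + g) = dpow A f + dpow A g"
  and dpow_diff [simp]: "dpow A (f - g) = dpow A f - dpow A g"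
  and dpow_sum [simp]: "dpow A (sum F S) = (\<Sum>x\<in>S. dpow A (F x))"
  and dpow_f_scale [simp]: "dpow A (f_scale c f) = f_scale c (dpow A f)"
  and dpow_zero [simp]: "dpow A 0 = 0"
  and dpow_minus [simp]: "dpow A (- f) = - dpow A f"
  and dpow_f_mat [simp]: "dpow A (f_mat M f) = f_mat M (dpow A f)"
  by (auto simp: dpow_def fun_eq_iff sum_apply vector_add_ldistrib vector_ssub_ldistrib
      vector_scale_sum vector_smult_assoc mult.commute matrix_vector_mult_scale)

lemma f_dx_add [simp]: "f_dx j (f + g) = f_dx j f + f_dx j g"
  and f_dx_diff [simp]: "f_dx j (f - g) = f_dx j f - f_dx j g"
  and f_dx_sum [simp]: "f_dx j (sum F S) = (\<Sum>x\<in>S. f_dx j (F x))"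
  and f_dx_f_scale [simp]: "f_dx j (f_scale c f) = f_scale c (f_dx j f)"
  and f_dx_zero [simp]: "f_dx j 0 = 0"
  and f_dx_f_mat [simp]: "f_dx j (f_mat M f) = f_mat M (f_dx j f)"
  by (auto simp: f_dx_def fun_eq_iff sum_apply vector_add_ldistrib vector_ssub_ldistrib
      vector_scale_sum vector_smult_assoc mult.commute matrix_vector_mult_scale vector_sadd_rdistrib
      matrix_vector_right_distrib distrib_left)

lemma f_mat_add [simp]: "f_mat M (f + g) = f_mat M f + f_mat M g"
  and f_mat_diff [simp]: "f_mat M (f - g) = f_mat M f - f_mat M g"
  and f_mat_sum [simp]: "f_mat M (sum F S) = (\<Sum>x\<in>S. f_mat M (F x))"
  and f_mat_f_scale [simp]: "f_mat M (f_scale c f) = f_scale c (f_mat M f)"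
  and f_mat_zero [simp]: "f_mat M 0 = 0"
  by (auto simp: f_mat_def fun_eq_iff sum_apply matrix_vector_right_distrib
      matrix_vector_mult_diff_distrib matrix_vector_mult_sum matrix_vector_mult_scale)

lemma f_mat_f_mat: "f_mat M (f_mat N f) = f_mat (M ** N) f"
  by (simp add: f_mat_def matrix_vector_mul_assoc)

lemma f_mat_add_left: "f_mat (A + B) f = f_mat A f + f_mat B f"
  and f_mat_diff_left: "f_mat (A - B) f = f_mat A f - f_mat B f"
  and f_mat_minus_left: "f_mat (- A) f = - f_mat A f"
  and f_mat_msc: "f_mat (msc c A) f = f_scale c (f_mat A f)"
  by (simp_all add: fun_eq_iff matrix_vector_mult_add_rdistrib matrix_vector_mult_diff_rdistrib
      matrix_vector_mult_minus_left msc_matrix_vector_mult)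

lemma f_pmul_single: "f_pmul (\<lambda>I. if I = B then c else 0) f = f_scale c (mpow B f)"
proof -
  have "\<And>K. (\<Sum>A\<in>{A. A \<le> K}. (if A = B then c else 0) *s f (\<lambda>r. K r - A r))
      = (if B \<le> K then c *s f (\<lambda>r. K r - B r) else 0)"
    by (simp add: if_distrib[of "\<lambda>x. x *s _"] sum.delta[OF finite_multiindices_le] cong: if_cong)
  then show ?thesis
    by (simp add: f_pmul_def mpow_def fun_eq_iff)
qed

lemma f_pmul_mono: "f_pmul (mono B) f = mpow B f"
  using f_pmul_single[of B 1 f] by (simp add: mono_def f_scale_def)

lemma f_pmul_zero [simp]: "f_pmul (\<lambda>_. 0) f = 0"
  by (simp add: f_pmul_def fun_eq_iff)

lemma f_pmul_add_poly: "f_pmul (\<lambda>I. p I + q I) f = f_pmul p f + f_pmul q f"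
  by (simp add: f_pmul_def fun_eq_iff vector_sadd_rdistrib sum.distrib)

lemma f_pmul_if_zero: "f_pmul (\<lambda>I. if c then p I else 0) f = (if c then f_pmul p f else 0)"
  by (cases c) simp_all

lemma f_pmul_if: "f_pmul (if c then p1 else p2) f = (if c then f_pmul p1 f else f_pmul p2 f)"
  by simp

lemma mpow_zero_index: "mpow (\<lambda>_. 0) f = f"
  by (simp add: mpow_def fun_eq_iff le_fun_def)

lemma mpow_mpow: "mpow A (mpow B f) = mpow (\<lambda>r. A r + B r) f"
  unfolding mpow_def fun_eq_iff using le_iff_add_le by (auto simp: diff_diff_add)

lemma mpow_commute: "mpow A (mpow B f) = mpow B (mpow A f)"
  by (simp add: mpow_mpow add.commute)

lemma mpow_upd_Suc: "mpow (I(i := Suc (I i))) h = mpow (unitv i) (mpow I h)"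
proof -
  have "(\<lambda>r. unitv i r + I r) = I(i := Suc (I i))"
    by (auto simp: fun_eq_iff)
  then show ?thesis
    by (simp add: mpow_mpow)
qed

lemma mpow_unitv: "mpow (unitv i) g = (\<lambda>K. if 0 < K i then g (K(i := K i - 1)) else 0)"
  unfolding mpow_def unitv_le_iff minus_unitv ..

lemma f_pmul_f_mat: "f_pmul p (\<lambda>K. M *v f K) = f_pmul p (f_mat M f)"
  by (simp add: f_mat_def)

lemma LieF_d: "LieF p (vf_d i) f = f_dx i f"
  by (simp add: LieF_def vf_d_def f_pmul_if pd_if sum_if_const pd_mono_zero f_pmul_mono
      mpow_zero_index cong: if_cong)

lemma LieF_xd: "LieF p (vf_xd i j) f = mpow (unitv i) (f_dx j f) + f_mat (p i j) f"
  by (simp add: LieF_def vf_xd_def f_pmul_if pd_if sum_if_const pd_mono_unitv f_pmul_mono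
      mpow_zero_index f_pmul_f_mat cong: if_cong)

lemma LieF_E:
  "LieF p vf_E f = (\<Sum>j\<in>UNIV. mpow (unitv j) (f_dx j f)) + (\<Sum>a\<in>UNIV. f_mat (p a a) f)"
  by (simp add: LieF_def vf_E_def f_pmul_if pd_if sum_if_const pd_mono_unitv f_pmul_mono
      mpow_zero_index f_pmul_f_mat cong: if_cong)

lemma LieF_xE: "LieF p (vf_xE i) f =
     (\<Sum>j\<in>UNIV. mpow (unitv i) (mpow (unitv j) (f_dx j f)))
   + ((\<Sum>j\<in>UNIV. mpow (unitv j) (f_mat (p i j) f)) + (\<Sum>a\<in>UNIV. mpow (unitv i) (f_mat (p a a) f)))"
  by (simp add: LieF_def vf_xE_def pd_mono_unitv_add f_pmul_add_poly f_pmul_if_zero f_pmul_mono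
      mpow_mpow sum.distrib f_pmul_f_mat sum_if_const cong: if_cong)

section \<open>Commuting derivatives past multiplications\<close>

lemma fact_add_div_fact: "fact (a + b) div (fact a :: nat) = pochhammer (Suc a) b"
proof -
  have "fact (a + b) = fact a * (pochhammer (Suc a) b :: nat)"
    using pochhammer_product'[of "1::nat" a b] by (simp add: pochhammer_fact)
  then show ?thesis
    by simp
qed

lemma pochhammer_Suc_shift:
  "Suc a * pochhammer (Suc (Suc a)) b = pochhammer (Suc a) b * (Suc a + b :: nat)"
  using pochhammer_rec[of "Suc a" b] pochhammer_Suc[of "Suc a" b] by simp

lemma pochhammer_Suc_split:
  assumes "0 < a + b"
  shows "pochhammer (Suc a) b = (if 0 < a then pochhammer a b else 0) + b * pochhammer (Suc a) (b - 1 :: nat)"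
proof (cases b)
  case (Suc c)
  have "pochhammer (Suc a) (Suc c) = pochhammer a (Suc c) + Suc c * (pochhammer (Suc a) c :: nat)"
    using pochhammer_rec[of a c] pochhammer_Suc[of "Suc a" c] by (simp add: algebra_simps)
  then show ?thesis
    using Suc by (simp add: pochhammer_0_left)
qed (use assms in simp)

text \<open>The coefficient in \<open>\<partial>\<^sup>J x\<^sup>L\<^sup>+\<^sup>J = (L+J)!/L! x\<^sup>L\<close>.\<close>
definition dpow_coeff :: "'m::finite mi \<Rightarrow> 'm mi \<Rightarrow> nat" where
  "dpow_coeff L J = (\<Prod>r\<in>UNIV. pochhammer (Suc (L r)) (J r))"

lemma dpow_eq: "dpow J f = (\<lambda>L. of_nat (dpow_coeff L J) *s f (\<lambda>r. L r + J r))"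
  by (simp add: dpow_def dpow_coeff_def fact_add_div_fact fun_eq_iff)

lemma dpow_coeff_upd: "dpow_coeff (L(j := a)) (J(j := b))
    = pochhammer (Suc a) b * (\<Prod>r\<in>UNIV-{j}. pochhammer (Suc (L r)) (J r))"
proof -
  have "(\<Prod>r\<in>UNIV-{j}. pochhammer (Suc ((L(j := a)) r)) ((J(j := b)) r))
      = (\<Prod>r\<in>UNIV-{j}. pochhammer (Suc (L r)) (J r) :: nat)"
    by (rule prod.cong) auto
  then show ?thesis
    unfolding dpow_coeff_def by (simp add: prod.remove[of UNIV j])
qed

lemma dpow_coeff_at: "dpow_coeff L J
    = pochhammer (Suc (L j)) (J j) * (\<Prod>r\<in>UNIV-{j}. pochhammer (Suc (L r)) (J r))"
  using dpow_coeff_upd[of L j "L j" J "J j"] by simp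

lemma dpow_coeff_Suc_right: "dpow_coeff L (J(j := Suc (J j))) = (L j + J j + 1) * dpow_coeff L J"
proof -
  let ?R = "\<Prod>r\<in>UNIV-{j}. pochhammer (Suc (L r)) (J r)"
  have "dpow_coeff L (J(j := Suc (J j))) = pochhammer (Suc (L j)) (Suc (J j)) * ?R"
    using dpow_coeff_upd[of L j "L j" J "Suc (J j)"] by simp
  also have "\<dots> = (L j + J j + 1) * (pochhammer (Suc (L j)) (J j) * ?R)"
    by (simp add: pochhammer_Suc algebra_simps)
  finally show ?thesis
    by (simp only: dpow_coeff_at[of L J j, symmetric])
qed

lemma dpow_coeff_Suc_left:
  "Suc (L i) * dpow_coeff (L(i := Suc (L i))) J = dpow_coeff L J * Suc (L i + J i)"
proof -
  let ?R = "\<Prod>r\<in>UNIV-{i}. pochhammer (Suc (L r)) (J r)"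
  have "Suc (L i) * dpow_coeff (L(i := Suc (L i))) J
      = (Suc (L i) * pochhammer (Suc (Suc (L i))) (J i)) * ?R"
    using dpow_coeff_upd[of L i "Suc (L i)" J "J i"] by (simp add: algebra_simps)
  also have "\<dots> = (pochhammer (Suc (L i)) (J i) * ?R) * Suc (L i + J i)"
    unfolding pochhammer_Suc_shift by (simp add: algebra_simps)
  finally show ?thesis
    by (simp only: dpow_coeff_at[of L J i, symmetric])
qed

lemma dpow_coeff_split:
  assumes "0 < L j + J j"
  shows "dpow_coeff L J = (if 0 < L j then dpow_coeff (L(j := L j - 1)) J else 0)
    + J j * dpow_coeff L (J(j := J j - 1))"
  using dpow_coeff_upd[of L j "L j - 1" J "J j"] dpow_coeff_upd[of L j "L j" J "J j - 1"]
    dpow_coeff_at[of L J j] pochhammer_Suc_split[OF assms]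
  by (simp add: algebra_simps)

lemma dpow_f_dx: "dpow J (f_dx j h) = dpow (J(j := Suc (J j))) h"
proof -
  have arg: "\<And>L. (\<lambda>r. L r + J r)(j := Suc (L j + J j)) = (\<lambda>r. L r + (J(j := Suc (J j))) r)"
    by (auto simp: fun_eq_iff)
  show ?thesis
    by (simp add: dpow_eq f_dx_def fun_eq_iff arg dpow_coeff_Suc_right vector_smult_assoc
        algebra_simps)
qed

lemma f_dx_dpow: "f_dx i (dpow J h) = dpow J (f_dx i h)"
proof (rule ext)
  fix L
  have "(of_nat (L i + 1) * of_nat (dpow_coeff (L(i := L i + 1)) J) :: complex)
      = of_nat (dpow_coeff L J) * of_nat (L i + J i + 1)"
    using dpow_coeff_Suc_left[of L i J] by (simp only: of_nat_mult[symmetric] Suc_eq_plus1)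
  moreover have "(\<lambda>r. (L(i := L i + 1)) r + J r) = (\<lambda>r. L r + J r)(i := L i + J i + 1)"
    by (auto simp: fun_eq_iff)
  ultimately show "f_dx i (dpow J h) L = dpow J (f_dx i h) L"
    by (simp only: f_dx_def dpow_eq vector_smult_assoc)
qed

lemma dpow_mpow_unitv: "dpow J (mpow (unitv j) h)
    = mpow (unitv j) (dpow J h) + f_scale (of_nat (J j)) (dpow (J(j := J j - 1)) h)"
proof (rule ext)
  fix L
  show "dpow J (mpow (unitv j) h) L
      = (mpow (unitv j) (dpow J h) + f_scale (of_nat (J j)) (dpow (J(j := J j - 1)) h)) L"
  proof (cases "L j = 0 \<and> J j = 0")
    case True
    then show ?thesis
      by (simp add: dpow_eq mpow_unitv)
  next
    case False
    then have pos: "0 < L j + J j"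
      by simp
    let ?N = "(\<lambda>r. L r + J r)(j := L j + J j - 1)"
    have shift_L: "(\<lambda>r. (L(j := L j - 1)) r + J r) = ?N" if "0 < L j"
      using that by (auto simp: fun_eq_iff)
    have shift_J: "(\<lambda>r. L r + (J(j := J j - 1)) r) = ?N" if "0 < J j"
      using that by (auto simp: fun_eq_iff)
    have "of_nat (dpow_coeff L J) *s h ?N
        = (if 0 < L j then of_nat (dpow_coeff (L(j := L j - 1)) J) *s h ?N else 0)
          + of_nat (J j) *s (of_nat (dpow_coeff L (J(j := J j - 1))) *s h ?N)"
      unfolding dpow_coeff_split[of L j J, OF pos] by (simp add: vector_sadd_rdistrib vector_smult_assoc)
    then show ?thesis
      using pos shift_L shift_J
      by (cases "0 < L j"; cases "0 < J j") (simp_all add: dpow_eq mpow_unitv)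
  qed
qed

lemma le_fun_upd_iff: "I \<le> K(i := k) \<longleftrightarrow> I(i := 0) \<le> K(i := 0) \<and> I i \<le> (k :: nat)"
  unfolding le_fun_def by (metis fun_upd_apply le0)

lemma f_dx_mpow: "f_dx i (mpow I h)
    = mpow I (f_dx i h) + f_scale (of_nat (I i)) (mpow (I(i := I i - 1)) h)"
proof (rule ext)
  fix K
  define M where "M = (\<lambda>r. K r - (I(i := I i - 1)) r)"
  have le: "I \<le> K \<longleftrightarrow> I(i := 0) \<le> K(i := 0) \<and> I i \<le> K i"
    using le_fun_upd_iff[of I K i "K i"] by simp
  note le_Suc = le_fun_upd_iff[of I K i "Suc (K i)"]
  have le_pred: "I(i := I i - 1) \<le> K \<longleftrightarrow> I(i := 0) \<le> K(i := 0) \<and> I i - 1 \<le> K i"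
    using le_fun_upd_iff[of "I(i := I i - 1)" K i "K i"] by simp
  have arg_Suc: "(\<lambda>r. (K(i := Suc (K i))) r - I r) = M" if "0 < I i"
    using that by (auto simp: M_def fun_eq_iff)
  have arg_inner: "(\<lambda>r. K r - I r)(i := Suc (K i - I i)) = M" if "0 < I i" "I i \<le> K i"
    using that by (auto simp: M_def fun_eq_iff)
  have arg_zero: "(\<lambda>r. (K(i := Suc (K i))) r - I r) = (\<lambda>r. K r - I r)(i := Suc (K i - I i))"
    if "I i = 0"
    using that by (auto simp: fun_eq_iff)
  consider (outside) "\<not> I(i := 0) \<le> K(i := 0) \<or> Suc (K i) < I i"
    | (zero) "I(i := 0) \<le> K(i := 0)" "I i = 0"
    | (inner) "I(i := 0) \<le> K(i := 0)" "0 < I i" "I i \<le> K i"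
    | (edge) "I(i := 0) \<le> K(i := 0)" "I i = Suc (K i)"
    by linarith
  then show "f_dx i (mpow I h) K
      = (mpow I (f_dx i h) + f_scale (of_nat (I i)) (mpow (I(i := I i - 1)) h)) K"
  proof cases
    case outside
    then have "\<not> I \<le> K(i := Suc (K i))" "\<not> I \<le> K" "\<not> I(i := I i - 1) \<le> K"
      using le le_Suc le_pred by auto
    then show ?thesis
      by (simp add: f_dx_def mpow_def)
  next
    case zero
    then have "I \<le> K(i := Suc (K i))" "I \<le> K"
      using le le_Suc by auto
    then show ?thesis
      using zero arg_zero by (simp add: f_dx_def mpow_def)
  next
    case inner
    then have "I \<le> K(i := Suc (K i))" "I \<le> K" "I(i := I i - 1) \<le> K"
      using le le_Suc le_pred by auto
    moreover have "(of_nat (Suc (K i)) :: complex) = of_nat (Suc (K i - I i)) + of_nat (I i)"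
      using inner by (simp add: of_nat_diff)
    ultimately show ?thesis
      using inner arg_Suc arg_inner M_def[symmetric]
      by (simp add: f_dx_def mpow_def vector_sadd_rdistrib)
  next
    case edge
    then have "I \<le> K(i := Suc (K i))" "\<not> I \<le> K" "I(i := I i - 1) \<le> K"
      using le le_Suc le_pred by auto
    then show ?thesis
      using edge arg_Suc M_def[symmetric] by (simp add: f_dx_def mpow_def)
  qed
qed

section \<open>The differential operator of a symbol\<close>

definition sym_supp :: "('m::finite,'n::finite,'k::finite) sym \<Rightarrow> ('m mi \<times> 'm mi) set" where
  "sym_supp s = {p. s (fst p) (snd p) \<noteq> 0}"

definition opS_term :: "('m::finite,'n::finite,'k::finite) sym \<Rightarrow> ('m mi \<Rightarrow> complex^'n)
    \<Rightarrow> 'm mi \<times> 'm mi \<Rightarrow> ('m mi \<Rightarrow> complex^'k)" where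
  "opS_term s f p = mpow (fst p) (dpow (snd p) (f_mat (s (fst p) (snd p)) f))"

lemma Ssym_iff: "s \<in> Ssym \<longleftrightarrow> finite (sym_supp s)"
  by (simp add: Ssym_def sym_supp_def)

lemma opS_eq_sum: "opS s f = sum (opS_term s f) (sym_supp s)"
  by (simp add: opS_def opS_term_def sym_supp_def f_mat_def)

lemma opS_eq_sum_superset:
  assumes "finite P" "sym_supp s \<subseteq> P"
  shows "opS s f = sum (opS_term s f) P"
  unfolding opS_eq_sum using assms
  by (intro sum.mono_neutral_left) (auto simp: sym_supp_def opS_term_def)

lemma opS_reindex:
  assumes "finite Q" "sym_supp t \<subseteq> g ` Q" "inj_on g Q"
    and "\<And>p. p \<in> Q \<Longrightarrow> opS_term t f (g p) = T p"
  shows "opS t f = sum T Q"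
proof -
  have "opS t f = sum (opS_term t f) (g ` Q)"
    using assms(1,2) by (intro opS_eq_sum_superset) auto
  also have "\<dots> = sum T Q"
    using assms(3,4) by (simp add: sum.reindex)
  finally show ?thesis .
qed

lemma Ssym_pointwise:
  assumes "s \<in> Ssym" "\<And>I J. s I J = 0 \<Longrightarrow> t I J = 0"
  shows "t \<in> Ssym"
proof -
  have "sym_supp t \<subseteq> sym_supp s"
    using assms(2) by (auto simp: sym_supp_def)
  then show ?thesis
    using assms(1) by (simp add: Ssym_iff finite_subset)
qed

lemma Ssym_add [simp]: "s \<in> Ssym \<Longrightarrow> t \<in> Ssym \<Longrightarrow> s + t \<in> Ssym"
  unfolding Ssym_iff
  by (rule finite_subset[of _ "sym_supp s \<union> sym_supp t"]) (auto simp: sym_supp_def)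

lemma Ssym_minus [simp]: "s \<in> Ssym \<Longrightarrow> - s \<in> Ssym"
  by (erule Ssym_pointwise) simp

lemma Ssym_ssc [simp]: "s \<in> Ssym \<Longrightarrow> ssc c s \<in> Ssym"
  by (erule Ssym_pointwise) simp

lemma Ssym_s_hom [simp]: "s \<in> Ssym \<Longrightarrow> s_hom p q a b s \<in> Ssym"
  by (erule Ssym_pointwise) (simp add: s_hom_def)

lemma Ssym_s_rho [simp]: "s \<in> Ssym \<Longrightarrow> s_rho p a b s \<in> Ssym"
  by (erule Ssym_pointwise) (simp add: s_rho_def)

lemma Ssym_diff [simp]: "s \<in> Ssym \<Longrightarrow> t \<in> Ssym \<Longrightarrow> s - t \<in> Ssym"
  using Ssym_add[of s "- t"] by simp

lemma Ssym_zero [simp]: "0 \<in> Ssym"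
  by (simp add: Ssym_iff sym_supp_def)

lemma Ssym_sum [simp]: "(\<And>x. x \<in> S \<Longrightarrow> F x \<in> Ssym) \<Longrightarrow> sum F S \<in> Ssym"
  by (induction S rule: infinite_finite_induct) auto

lemma sym_supp_s_mx: "sym_supp (s_mx i s) \<subseteq> (\<lambda>p. ((fst p)(i := Suc (fst p i)), snd p)) ` sym_supp s"
proof
  fix x
  assume "x \<in> sym_supp (s_mx i s)"
  then obtain I J where "x = (I, J)" "0 < I i" "s (I(i := I i - 1)) J \<noteq> 0"
    by (cases x) (auto simp: sym_supp_def s_mx_def split: if_splits)
  then show "x \<in> (\<lambda>p. ((fst p)(i := Suc (fst p i)), snd p)) ` sym_supp s"
    by (intro image_eqI[of _ _ "(I(i := I i - 1), J)"]) (auto simp: sym_supp_def)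
qed

lemma sym_supp_s_mxi: "sym_supp (s_mxi i s) \<subseteq> (\<lambda>p. (fst p, (snd p)(i := Suc (snd p i)))) ` sym_supp s"
proof
  fix x
  assume "x \<in> sym_supp (s_mxi i s)"
  then obtain I J where "x = (I, J)" "0 < J i" "s I (J(i := J i - 1)) \<noteq> 0"
    by (cases x) (auto simp: sym_supp_def s_mxi_def split: if_splits)
  then show "x \<in> (\<lambda>p. (fst p, (snd p)(i := Suc (snd p i)))) ` sym_supp s"
    by (intro image_eqI[of _ _ "(I, J(i := J i - 1))"]) (auto simp: sym_supp_def)
qed

lemma sym_supp_s_dx: "sym_supp (s_dx i s)
    \<subseteq> (\<lambda>p. ((fst p)(i := fst p i - 1), snd p)) ` {p \<in> sym_supp s. 0 < fst p i}"
proof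
  fix x
  assume "x \<in> sym_supp (s_dx i s)"
  then obtain I J where "x = (I, J)" "s (I(i := Suc (I i))) J \<noteq> 0"
    by (cases x) (auto simp: sym_supp_def s_dx_def dest: msc_nonzero)
  then show "x \<in> (\<lambda>p. ((fst p)(i := fst p i - 1), snd p)) ` {p \<in> sym_supp s. 0 < fst p i}"
    by (intro image_eqI[of _ _ "(I(i := Suc (I i)), J)"]) (auto simp: sym_supp_def)
qed

lemma sym_supp_s_dxi: "sym_supp (s_dxi i s)
    \<subseteq> (\<lambda>p. (fst p, (snd p)(i := snd p i - 1))) ` {p \<in> sym_supp s. 0 < snd p i}"
proof
  fix x
  assume "x \<in> sym_supp (s_dxi i s)"
  then obtain I J where "x = (I, J)" "s I (J(i := Suc (J i))) \<noteq> 0"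
    by (cases x) (auto simp: sym_supp_def s_dxi_def dest: msc_nonzero)
  then show "x \<in> (\<lambda>p. (fst p, (snd p)(i := snd p i - 1))) ` {p \<in> sym_supp s. 0 < snd p i}"
    by (intro image_eqI[of _ _ "(I, J(i := Suc (J i)))"]) (auto simp: sym_supp_def)
qed

lemma Ssym_s_mx [simp]: "s \<in> Ssym \<Longrightarrow> s_mx i s \<in> Ssym"
  unfolding Ssym_iff by (rule finite_subset[OF sym_supp_s_mx]) simp

lemma Ssym_s_mxi [simp]: "s \<in> Ssym \<Longrightarrow> s_mxi i s \<in> Ssym"
  unfolding Ssym_iff by (rule finite_subset[OF sym_supp_s_mxi]) simp

lemma Ssym_s_dx [simp]: "s \<in> Ssym \<Longrightarrow> s_dx i s \<in> Ssym"
  unfolding Ssym_iff by (rule finite_subset[OF sym_supp_s_dx]) simp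

lemma Ssym_s_dxi [simp]: "s \<in> Ssym \<Longrightarrow> s_dxi i s \<in> Ssym"
  unfolding Ssym_iff by (rule finite_subset[OF sym_supp_s_dxi]) simp

lemma opS_add: "s \<in> Ssym \<Longrightarrow> t \<in> Ssym \<Longrightarrow> opS (s + t) f = opS s f + opS t f"
  and opS_diff: "s \<in> Ssym \<Longrightarrow> t \<in> Ssym \<Longrightarrow> opS (s - t) f = opS s f - opS t f"
proof -
  assume "s \<in> Ssym" "t \<in> Ssym"
  then have P: "finite (sym_supp s \<union> sym_supp t)"
    by (simp add: Ssym_iff)
  have "opS u f = sum (opS_term u f) (sym_supp s \<union> sym_supp t)"
    if "u \<in> {s, t, s + t, s - t}" for u
    using that by (intro opS_eq_sum_superset[OF P]) (auto simp: sym_supp_def)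
  then show "opS (s + t) f = opS s f + opS t f" "opS (s - t) f = opS s f - opS t f"
    by (simp_all add: opS_term_def f_mat_add_left f_mat_diff_left sum.distrib sum_subtractf)
qed

lemma opS_zero [simp]: "opS 0 f = 0"
  by (simp add: opS_eq_sum sym_supp_def)

lemma opS_sum: "(\<And>x. x \<in> S \<Longrightarrow> F x \<in> Ssym) \<Longrightarrow> opS (sum F S) f = (\<Sum>x\<in>S. opS (F x) f)"
  by (induction S rule: infinite_finite_induct) (auto simp: opS_add)

lemma opS_add_right [simp]: "opS s (f + g) = opS s f + opS s g"
  and opS_diff_right [simp]: "opS s (f - g) = opS s f - opS s g"
  and opS_sum_right [simp]: "opS s (sum F S) = (\<Sum>x\<in>S. opS s (F x))"
  and opS_zero_right [simp]: "opS s 0 = 0"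
  by (simp_all add: opS_eq_sum opS_term_def sum.distrib sum_subtractf flip: sum.swap[of _ S])

lemma inj_upd_Suc: "inj (\<lambda>I::'a \<Rightarrow> nat. I(i := Suc (I i)))"
proof (rule injI)
  fix I I' :: "'a \<Rightarrow> nat"
  assume eq: "I(i := Suc (I i)) = I'(i := Suc (I' i))"
  show "I = I'"
  proof
    fix r
    have "(I(i := Suc (I i))) r = (I'(i := Suc (I' i))) r"
      using eq by simp
    then show "I r = I' r"
      by (cases "r = i") auto
  qed
qed

lemma inj_on_upd_pred: "inj_on (\<lambda>I::'a \<Rightarrow> nat. I(i := I i - 1)) {I. 0 < I i}"
proof (rule inj_onI)
  fix I I' :: "'a \<Rightarrow> nat"
  assume eq: "I(i := I i - 1) = I'(i := I' i - 1)" and pos: "I \<in> {I. 0 < I i}" "I' \<in> {I. 0 < I i}"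
  show "I = I'"
  proof
    fix r
    have "(I(i := I i - 1)) r = (I'(i := I' i - 1)) r"
      using eq by simp
    then show "I r = I' r"
      using pos by (cases "r = i") auto
  qed
qed

context
  fixes s :: "('m::finite,'n::finite,'k::finite) sym"
  assumes s: "s \<in> Ssym"
begin

lemma finite_sym_supp: "finite (sym_supp s)"
  using s by (simp add: Ssym_iff)

lemma opS_s_mx: "opS (s_mx i s) f = mpow (unitv i) (opS s f)"
proof -
  have "inj_on (\<lambda>p. ((fst p)(i := Suc (fst p i)), snd p)) (sym_supp s)"
    using inj_upd_Suc[of i] by (auto simp: inj_on_def)
  then have "opS (s_mx i s) f = (\<Sum>p\<in>sym_supp s. mpow (unitv i) (opS_term s f p))"
    by (rule opS_reindex[OF finite_sym_supp sym_supp_s_mx])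
      (auto simp: opS_term_def s_mx_def mpow_upd_Suc)
  then show ?thesis
    by (simp add: opS_eq_sum)
qed

lemma opS_s_mxi: "opS (s_mxi i s) f = opS s (f_dx i f)"
proof -
  have "inj_on (\<lambda>p. (fst p, (snd p)(i := Suc (snd p i)))) (sym_supp s)"
    using inj_upd_Suc[of i] by (auto simp: inj_on_def)
  then have "opS (s_mxi i s) f = (\<Sum>p\<in>sym_supp s. opS_term s (f_dx i f) p)"
    by (rule opS_reindex[OF finite_sym_supp sym_supp_s_mxi])
      (auto simp: opS_term_def s_mxi_def dpow_f_dx[symmetric])
  then show ?thesis
    by (simp add: opS_eq_sum)
qed

lemma opS_s_dx: "opS (s_dx i s) f = f_dx i (opS s f) - opS s (f_dx i f)"
proof -
  let ?Q = "{p \<in> sym_supp s. 0 < fst p i}"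
  let ?T = "\<lambda>p. f_dx i (opS_term s f p) - opS_term s (f_dx i f) p"
  have "inj_on (\<lambda>p. ((fst p)(i := fst p i - 1), snd p)) ?Q"
    using inj_on_upd_pred[of i] by (auto simp: inj_on_def)
  then have "opS (s_dx i s) f = sum ?T ?Q"
    using finite_sym_supp
    by (intro opS_reindex[OF _ sym_supp_s_dx])
      (auto simp: opS_term_def s_dx_def f_mat_msc f_dx_mpow f_dx_dpow)
  also have "\<dots> = sum ?T (sym_supp s)"
    using finite_sym_supp
    by (intro sum.mono_neutral_left) (auto simp: opS_term_def f_dx_mpow f_dx_dpow)
  finally show ?thesis
    by (simp add: opS_eq_sum sum_subtractf)
qed

lemma opS_s_dxi: "opS (s_dxi i s) f = opS s (mpow (unitv i) f) - mpow (unitv i) (opS s f)"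
proof -
  let ?Q = "{p \<in> sym_supp s. 0 < snd p i}"
  let ?T = "\<lambda>p. opS_term s (mpow (unitv i) f) p - mpow (unitv i) (opS_term s f p)"
  have "inj_on (\<lambda>p. (fst p, (snd p)(i := snd p i - 1))) ?Q"
    using inj_on_upd_pred[of i] by (auto simp: inj_on_def)
  then have "opS (s_dxi i s) f = sum ?T ?Q"
    using finite_sym_supp
    by (intro opS_reindex[OF _ sym_supp_s_dxi])
      (auto simp: opS_term_def s_dxi_def f_mat_msc dpow_mpow_unitv mpow_commute[of "unitv i"]
        f_mat_def[symmetric])
  also have "\<dots> = sum ?T (sym_supp s)"
    using finite_sym_supp
    by (intro sum.mono_neutral_left)
      (auto simp: opS_term_def dpow_mpow_unitv mpow_commute[of "unitv i"] f_mat_def[symmetric])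
  finally show ?thesis
    by (simp add: opS_eq_sum sum_subtractf)
qed

lemma opS_s_hom: "opS (s_hom p q a b s) f = f_mat (q a b) (opS s f) - opS s (f_mat (p a b) f)"
proof -
  have "opS (s_hom p q a b s) f = sum (opS_term (s_hom p q a b s) f) (sym_supp s)"
    by (rule opS_eq_sum_superset[OF finite_sym_supp]) (auto simp: sym_supp_def s_hom_def)
  then show ?thesis
    by (simp add: opS_eq_sum opS_term_def s_hom_def f_mat_diff_left f_mat_f_mat sum_subtractf)
qed

lemma opS_s_rho: "opS (s_rho p a b s) f = - opS s (f_mat (p a b) f)"
proof -
  have "opS (s_rho p a b s) f = sum (opS_term (s_rho p a b s) f) (sym_supp s)"
    by (rule opS_eq_sum_superset[OF finite_sym_supp]) (auto simp: sym_supp_def s_rho_def)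
  then show ?thesis
    by (simp add: opS_eq_sum opS_term_def s_rho_def f_mat_minus_left f_mat_f_mat sum_negf)
qed

end

lemma dpow_coeff_pos: "0 < dpow_coeff L J"
  by (simp add: dpow_coeff_def prod_pos pochhammer_pos)

lemma multiindex_eq_of_degree_le:
  fixes I I0 J J0 :: "'m::finite mi"
  assumes "I \<le> I0" "(\<lambda>r. I0 r - I r + J r) = J0" "(\<Sum>r\<in>UNIV. J0 r) \<le> (\<Sum>r\<in>UNIV. J r)"
  shows "I = I0 \<and> J = J0"
proof -
  have "(\<Sum>r\<in>UNIV. J0 r) = (\<Sum>r\<in>UNIV. I0 r - I r) + (\<Sum>r\<in>UNIV. J r)"
    unfolding assms(2)[symmetric] by (simp add: sum.distrib)
  then have "\<forall>r. I0 r - I r = 0"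
    using assms(3) by simp
  then have "I = I0"
    using assms(1) by (auto simp: le_fun_def fun_eq_iff intro: antisym)
  with assms(2) show ?thesis
    by (simp add: fun_eq_iff)
qed

text \<open>\<open>NS\<^sup>-\<^sup>1\<close> is injective: apply the operator of a nonzero symbol to \<open>v x\<^sup>J\<^sup>0\<close>, where
  \<open>(I0, J0)\<close> is a term of least \<open>\<xi>\<close>-degree, and read off the coefficient of \<open>x\<^sup>I\<^sup>0\<close>.\<close>
lemma sym_eq_0_if_opS_eq_0:
  fixes s :: "('m::finite,'n::finite,'k::finite) sym"
  assumes "s \<in> Ssym" and zero: "\<forall>f\<in>Fpoly. opS s f = 0"
  shows "s = 0"
proof (rule ccontr)
  assume "s \<noteq> 0"
  then obtain p where "p \<in> sym_supp s"
    by (auto simp: fun_eq_iff sym_supp_def)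
  then obtain I0 J0 where in0: "(I0, J0) \<in> sym_supp s"
    and least: "\<And>I J. (I, J) \<in> sym_supp s \<Longrightarrow> (\<Sum>r\<in>UNIV. J0 r) \<le> (\<Sum>r\<in>UNIV. J r)"
    using ex_has_least_nat[of "\<lambda>p. p \<in> sym_supp s" p "\<lambda>p. \<Sum>r\<in>UNIV. snd p r"] by fastforce
  then obtain v where v: "s I0 J0 *v v \<noteq> 0"
    using matrix_eq[of "s I0 J0" 0] by (auto simp: sym_supp_def)
  define f :: "'m mi \<Rightarrow> complex^'n" where "f = (\<lambda>L. if L = J0 then v else 0)"
  have "f \<in> Fpoly"
    unfolding Fpoly_def by (rule CollectI, rule finite_subset[of _ "{J0}"]) (auto simp: f_def)
  have vanish: "opS_term s f p I0 = 0" if "p \<in> sym_supp s - {(I0, J0)}" for p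
  proof -
    obtain I J where p: "p = (I, J)"
      by (cases p)
    have "f (\<lambda>r. I0 r - I r + J r) = 0" if "I \<le> I0"
      using multiindex_eq_of_degree_le[OF \<open>I \<le> I0\<close> _ least] \<open>p \<in> sym_supp s - {(I0, J0)}\<close>
      by (auto simp: f_def p)
    then show ?thesis
      by (simp add: opS_term_def mpow_def dpow_eq p)
  qed
  have "opS s f I0 = opS_term s f (I0, J0) I0 + (\<Sum>p\<in>sym_supp s - {(I0, J0)}. opS_term s f p I0)"
    using assms(1) in0 by (simp add: opS_eq_sum sum_apply Ssym_iff sum.remove)
  also have "\<dots> = of_nat (dpow_coeff (\<lambda>_. 0) J0) *s (s I0 J0 *v v)"
    using vanish by (simp add: opS_term_def mpow_def dpow_eq f_def)
  finally show False
    using zero \<open>f \<in> Fpoly\<close> v dpow_coeff_pos[of "\<lambda>_. 0" J0] by (simp add: vec_eq_iff)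
qed

lemma LieNS_eqI:
  fixes s t :: "('m::finite,'n::finite,'k::finite) sym"
  assumes "s \<in> Ssym" "t \<in> Ssym"
    and "\<And>f. opS t f = LieF q X (opS s f) - opS s (LieF p X f)"
  shows "LieNS p q X s = t"
  unfolding LieNS_def
proof (rule the_equality)
  fix t'
  assume t': "t' \<in> Ssym \<and> (\<forall>f\<in>Fpoly. opS t' f = LieF q X (opS s f) - opS s (LieF p X f))"
  have "t' - t = 0"
    using t' assms by (intro sym_eq_0_if_opS_eq_0) (simp_all add: opS_diff)
  then show "t' = t"
    by simp
qed (use assms in simp)

section \<open>Parts (ii) and (iii)\<close>

lemmas opS_intertwining = opS_s_mx opS_s_mxi opS_s_dx opS_s_dxi opS_s_hom opS_s_rho
  opS_add opS_diff opS_sum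

context
  fixes s :: "('m::finite,'n::finite,'k::finite) sym"
  assumes s: "s \<in> Ssym"
begin

lemma Ssym_LieS_xd [simp]: "LieS p q (vf_xd i j) s \<in> Ssym"
  by (simp add: s LieS_xd)

lemma Ssym_LieS_E [simp]: "LieS p q vf_E s \<in> Ssym"
  by (simp add: s LieS_E)

lemma LieNS_d: "LieNS p q (vf_d i) s = LieS p q (vf_d i) s"
  by (rule LieNS_eqI) (simp_all add: s LieS_d LieF_d opS_intertwining)

lemma LieNS_xd: "LieNS p q (vf_xd i j) s = LieS p q (vf_xd i j) s"
  by (rule LieNS_eqI) (simp_all add: s LieS_xd LieF_xd opS_intertwining algebra_simps)

lemma LieNS_E: "LieNS p q vf_E s = LieS p q vf_E s"
  by (rule LieNS_eqI)
    (simp_all add: s LieS_E LieF_E opS_intertwining algebra_simps sum.distrib sum_subtractf)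

end

definition xE_correction ::
    "('m::finite, 'n::finite) mat_family \<Rightarrow> 'm \<Rightarrow> ('m,'n,'k::finite) sym \<Rightarrow> ('m,'n,'k) sym"
  where "xE_correction p i s = - (\<Sum>r\<in>UNIV. s_mxi r (s_dxi r (s_dxi i s)))
    + (\<Sum>k\<in>UNIV. s_rho p i k (s_dxi k s)) + (\<Sum>r\<in>UNIV. s_rho p r r (s_dxi i s))"

lemma LieNS_xE: "s \<in> Ssym \<Longrightarrow> LieNS p q (vf_xE i) s = LieS p q (vf_xE i) s + xE_correction p i s"
  by (rule LieNS_eqI)
    (simp_all add: LieS_xE LieS_d LieF_xE xE_correction_def opS_intertwining algebra_simps
      sum.distrib sum_subtractf mpow_commute)

lemma sum_xE_correction: "(\<Sum>i\<in>UNIV. xE_correction p i (s_dx i s)) =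
    (\<Sum>i\<in>UNIV. \<Sum>j\<in>UNIV. s_rho p i j (s_dxi j (s_dx i s))) + rhoE p (Div s) - Exi (Div s)"
  by (simp add: xE_correction_def rhoE_def Exi_def Div_def sum.distrib sum_subtractf)
    (subst (1 2) sum.swap, rule refl)

lemma OmegaA_LieNS: "s \<in> Ssym \<Longrightarrow> OmegaA (LieNS p q) s =
    OmegaA (LieS p q) s
    - ssc 2 (\<Sum>i\<in>UNIV. \<Sum>j\<in>UNIV. s_rho p i j (s_dxi j (s_dx i s)))
    - ssc 2 (rhoE p (Div s) - Exi (Div s))"
proof -
  assume s: "s \<in> Ssym"
  have "OmegaA (LieNS p q) s = OmegaA (LieS p q) s - ssc 2 (\<Sum>i\<in>UNIV. xE_correction p i (s_dx i s))"
    unfolding OmegaA_def using s by (simp add: LieNS_xd LieNS_d LieNS_E LieNS_xE LieS_d sum.distrib)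
  then show ?thesis
    unfolding sum_xE_correction by (simp add: algebra_simps)
qed

lemma OmegaA_LieNS_scalar:
  fixes s :: "('m::finite,'n::finite,'k::finite) sym"
  assumes "s \<in> Ssym" and scalar: "p = (\<lambda>i j. if i = j then mat \<gamma> else 0)"
  shows "OmegaA (LieNS p q) s = OmegaA (LieS p q) s
    + ssc 2 (Exi (Div s) + ssc (of_nat (CARD('m) + 1) * \<gamma>) (Div s))"
proof -
  have rho: "s_rho p i j t = (if i = j then ssc (- \<gamma>) t else 0)" for i j and t :: "('m,'n,'k) sym"
    by (auto simp: scalar s_rho_def matrix_mult_mat_right fun_eq_iff vec_eq_iff)
  have rho_sum: "(\<Sum>i\<in>UNIV. \<Sum>j\<in>UNIV. s_rho p i j (s_dxi j (s_dx i s))) = ssc (- \<gamma>) (Div s)"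
    by (simp add: rho Div_def cong: if_cong)
  have rhoE: "rhoE p (Div s) = (\<Sum>r\<in>(UNIV::'m set). ssc (- \<gamma>) (Div s))"
    by (simp add: rhoE_def rho)
  show ?thesis
    unfolding OmegaA_LieNS[OF \<open>s \<in> Ssym\<close>] rho_sum rhoE
    by (simp add: fun_eq_iff vec_eq_iff sum_apply algebra_simps of_nat_index)
qed

theorem mainTheorem8:
  fixes \<phi> :: "'m::finite \<Rightarrow> 'm \<Rightarrow> complex^'n^'n"
    and \<phi>' :: "'m \<Rightarrow> 'm \<Rightarrow> complex^'k^'k"
  assumes "is_glrep \<phi>" and "is_glrep \<phi>'"
  shows "(\<forall>s\<in>(Ssym :: ('m,'n,'k) sym set).
           OmegaA (LieS \<phi> \<phi>') s =
             homOmega \<phi> \<phi>' s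
             - ssc 2 (\<Sum>i\<in>UNIV. \<Sum>j\<in>UNIV. s_hom \<phi> \<phi>' i j (s_mxi i (s_dxi j s)))
             + homE \<phi> \<phi>' (homE \<phi> \<phi>' s - ssc 2 (Exi s) - ssc (of_nat (CARD('m) + 1)) s)
             + ssc 2 (Exi (Exi s + ssc (of_nat CARD('m)) s)))
       \<and> (\<forall>s\<in>(Ssym :: ('m,'n,'k) sym set).
           OmegaA (LieNS \<phi> \<phi>') s =
             OmegaA (LieS \<phi> \<phi>') s
             - ssc 2 (\<Sum>i\<in>UNIV. \<Sum>j\<in>UNIV. s_rho \<phi> i j (s_dxi j (s_dx i s)))
             - ssc 2 (rhoE \<phi> (Div s) - Exi (Div s)))
       \<and> (\<forall>\<gamma>::complex. CARD('n) = 1 \<and> \<phi> = (\<lambda>i j. if i = j then mat \<gamma> else 0) \<longrightarrow>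
           (\<forall>s\<in>(Ssym :: ('m,'n,'k) sym set).
             OmegaA (LieNS \<phi> \<phi>') s =
               OmegaA (LieS \<phi> \<phi>') s
               + ssc 2 (Exi (Div s) + ssc (of_nat (CARD('m) + 1) * \<gamma>) (Div s))))"
  using OmegaA_LieS OmegaA_LieNS OmegaA_LieNS_scalar by blast

end
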